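(* Let $X$ be a real topological vector space, let $C$ be a non-empty subset of $X$, and let $f:X\times X\to\mathbb{R}$ be a bifunction. Then $f$ is cyclically quasi-monotone on $C$ if and only if for every finite non-empty subset $A$ of $C$ there exists $x\in A$ such that \[ \max_{a\in A} f(a,x)\leq 0. \]
   Context: A bifunction $f:X\times X\to\mathbb{R}$ is called cyclically quasi-monotone on $C$ if for every $n\in\mathbb{N}$ and all $x_0,x_1,\dots,x_n\in C$ there exists $i\in\{0,1,\dots,n\}$ such that $f(x_i,x_{i+1})\leq 0$, where $x_{n+1}:=x_0$. *)

theory Defs
  imports "HOL-Analysis.Analysis"
begin

definition cyclically_quasi_monotone_on :: "'a set \<Rightarrow> ('a \<Rightarrow> 'a \<Rightarrow> real) \<Rightarrow> bool" where
  "cyclically_quasi_monotone_on C f \<longleftrightarrow>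
     (\<forall>(n::nat) (x::nat \<Rightarrow> 'a). (\<forall>i\<le>n. x i \<in> C) \<longrightarrow>
        (\<exists>i\<le>n. f (x i) (x (if i = n then 0 else Suc i)) \<le> 0))"

end

theory Submission
  imports Defs
begin

text \<open>If no point of a finite set \<open>A \<subseteq> C\<close> satisfies \<open>f a x \<le> 0\<close> for all \<open>a \<in> A\<close>,
  choose for every \<open>x \<in> A\<close> a point \<open>p x \<in> A\<close> with \<open>f (p x) x > 0\<close>. Since \<open>A\<close> is finite,
  the self-map \<open>p\<close> has a periodic point, and running its orbit backwards yields a cycle
  \<open>x\<^sub>0, \<dots>, x\<^sub>n\<close> in \<open>C\<close> with \<open>x\<^sub>i = p x\<^sub>i\<^sub>+\<^sub>1\<close>, so that every \<open>f x\<^sub>i x\<^sub>i\<^sub>+\<^sub>1\<close> is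
  positive. Conversely, applying the condition to the set of points of a cycle gives a
  point \<open>x\<^sub>j\<close> with \<open>f x\<^sub>j\<^sub>-\<^sub>1 x\<^sub>j \<le> 0\<close> (indices modulo \<open>n + 1\<close>).\<close>

lemma funpow_in_closed_set:
  assumes "\<forall>x\<in>A. p x \<in> A" "x \<in> A"
  shows "(p ^^ k) x \<in> A"
  using assms by (induction k) auto

lemma finite_self_map_periodic_point:
  assumes "finite A" "\<forall>x\<in>A. p x \<in> A" "x \<in> A"
  obtains y k where "y \<in> A" "k > 0" "(p ^^ k) y = y"
proof -
  let ?orbit = "\<lambda>k. (p ^^ k) x"
  have "?orbit ` {..card A} \<subseteq> A"
    using assms(2,3) funpow_in_closed_set by (auto simp del: funpow.simps)
  then have "card (?orbit ` {..card A}) < card {..card A}"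
    using assms(1) card_mono le_imp_less_Suc by (metis card_atMost)
  then have "\<not> inj_on ?orbit {..card A}"
    by (rule pigeonhole)
  then obtain i j where "i < j" "?orbit i = ?orbit j"
    unfolding inj_on_def by (metis linorder_neqE_nat)
  moreover have "(p ^^ (j - i)) (?orbit i) = ?orbit j"
    using \<open>i < j\<close> funpow_add[of "j - i" i p] by simp
  moreover have "?orbit i \<in> A"
    using assms(2,3) by (rule funpow_in_closed_set)
  ultimately show thesis
    using that[of "?orbit i" "j - i"] by simp
qed

lemma finite_self_map_backward_cycle:
  assumes "finite A" "A \<noteq> {}" "\<forall>x\<in>A. p x \<in> A"
  obtains n z where "\<forall>i\<le>n. z i \<in> A" "\<forall>i\<le>n. z i = p (z (if i = n then 0 else Suc i))"
proof -
  obtain x where "x \<in> A"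
    using assms(2) by blast
  then obtain y k where y: "y \<in> A" "k > 0" "(p ^^ k) y = y"
    using assms(1,3) finite_self_map_periodic_point by metis
  define z where "z i = (p ^^ (k - i)) y" for i
  have "z i = p (z (if i = k - 1 then 0 else Suc i))" if "i \<le> k - 1" for i
  proof (cases "i = k - 1")
    case True
    then show ?thesis
      using y by (simp add: z_def funpow_swap1)
  next
    case False
    then have "k - i = Suc (k - Suc i)"
      using that by linarith
    then show ?thesis
      using False by (simp add: z_def)
  qed
  moreover have "z i \<in> A" for i
    unfolding z_def using assms(3) y(1) by (rule funpow_in_closed_set)
  ultimately show thesis
    using that[of "k - 1" z] by blast
qed

lemma cyclically_quasi_monotone_onD:
  assumes "cyclically_quasi_monotone_on C f" "finite A" "A \<noteq> {}" "A \<subseteq> C"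
  shows "\<exists>x\<in>A. \<forall>a\<in>A. f a x \<le> 0"
proof (rule ccontr)
  assume "\<not> ?thesis"
  then obtain p where p: "\<And>x. x \<in> A \<Longrightarrow> p x \<in> A \<and> f (p x) x > 0"
    by (metis not_le)
  then obtain n z where z: "\<forall>i\<le>n. z i \<in> A"
      "\<forall>i\<le>n. z i = p (z (if i = n then 0 else Suc i))"
    using assms(2,3) finite_self_map_backward_cycle by metis
  have "f (z i) (z (if i = n then 0 else Suc i)) > 0" if "i \<le> n" for i
  proof -
    have "(if i = n then 0 else Suc i) \<le> n"
      using that by auto
    then show ?thesis
      using p z that by metis
  qed
  moreover have "\<exists>i\<le>n. f (z i) (z (if i = n then 0 else Suc i)) \<le> 0"
    using assms(1,4) z(1) unfolding cyclically_quasi_monotone_on_def by blast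
  ultimately show False
    by (meson not_le)
qed

lemma cyclically_quasi_monotone_onI:
  assumes "\<And>A. finite A \<Longrightarrow> A \<noteq> {} \<Longrightarrow> A \<subseteq> C \<Longrightarrow> \<exists>x\<in>A. \<forall>a\<in>A. f a x \<le> 0"
  shows "cyclically_quasi_monotone_on C f"
  unfolding cyclically_quasi_monotone_on_def
proof (intro allI impI)
  fix n and x :: "nat \<Rightarrow> 'a"
  assume "\<forall>i\<le>n. x i \<in> C"
  then obtain j where j: "j \<le> n" "\<forall>i\<le>n. f (x i) (x j) \<le> 0"
    using assms[of "x ` {..n}"] by auto
  show "\<exists>i\<le>n. f (x i) (x (if i = n then 0 else Suc i)) \<le> 0"
  proof (cases "j = 0")
    case True
    then show ?thesis
      using j by (intro exI[of _ n]) auto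
  next
    case False
    then show ?thesis
      using j by (intro exI[of _ "j - 1"]) auto
  qed
qed

theorem proposition2p1:
  fixes C :: "'a::{real_vector, topological_space} set"
    and f :: "'a \<Rightarrow> 'a \<Rightarrow> real"
  assumes "C \<noteq> {}"
  shows "cyclically_quasi_monotone_on C f \<longleftrightarrow>
    (\<forall>A. finite A \<and> A \<noteq> {} \<and> A \<subseteq> C \<longrightarrow>
       (\<exists>x\<in>A. (MAX a\<in>A. f a x) \<le> 0))"
proof -
  have "(MAX a\<in>A. f a x) \<le> 0 \<longleftrightarrow> (\<forall>a\<in>A. f a x \<le> 0)" if "finite A" "A \<noteq> {}" for A x
    using that by simp
  then show ?thesis
    using cyclically_quasi_monotone_onD[of C f] cyclically_quasi_monotone_onI[of C f] by auto
qed

end
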